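(* Let $\Omega\subseteq\mathbb R^3$ be a nonempty open set, $V\in\Omega$ and $k\ge0$. Then $$\{\kappa_{\vec x-V}(\mathbf q_1):\mathbf q_1\in[\Pi^k(\Omega)]^3\}=\{\kappa_{\vec x-V}(\mathbf q_2):\mathbf q_2\in[\Pi^k(\Omega)]^3,\ \operatorname{div}\mathbf q_2=0\}.$$
   Context: $\Pi^k(\Omega)$ denotes the space of polynomials of total degree at most $k$ in $\vec x=(x,y,z)$, restricted to $\Omega$. For $V\in\mathbb R^3$ the Koszul operator is $\kappa_{\vec x-V}(\mathbf a):=(\vec x-V)\times\mathbf a$ for vector fields $\mathbf a$. *)

theory Defs
  imports "HOL-Analysis.Analysis"
begin

definition poly3 :: "nat \<Rightarrow> (real^3 \<Rightarrow> real) set" where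
  "poly3 k = {p. \<exists>c :: nat \<Rightarrow> nat \<Rightarrow> nat \<Rightarrow> real. \<forall>v.
     p v = (\<Sum>(a,b,d) \<in> {(a,b,d). a + b + d \<le> k}. c a b d * (v$1)^a * (v$2)^b * (v$3)^d)}"

definition polyvec3 :: "nat \<Rightarrow> (real^3 \<Rightarrow> real^3) set" where
  "polyvec3 k = {q. \<forall>i. (\<lambda>v. q v $ i) \<in> poly3 k}"

definition divergence :: "(real^3 \<Rightarrow> real^3) \<Rightarrow> real^3 \<Rightarrow> real" where
  "divergence q v = (\<Sum>i\<in>UNIV. frechet_derivative q (at v) (axis i 1) $ i)"

definition koszul :: "real^3 \<Rightarrow> (real^3 \<Rightarrow> real^3) \<Rightarrow> real^3 \<Rightarrow> real^3" where
  "koszul V a v = cross3 (v - V) (a v)"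

end

theory Submission
  imports Defs
begin

text \<open>Write \<open>y = x - V\<close>. Since \<open>y \<times> y = 0\<close>, the Koszul image of \<open>q\<close> does not change when
  \<open>q\<close> is replaced by \<open>q - p y\<close> for a scalar polynomial \<open>p\<close>. By Euler's identity
  \<open>div (p y) = \<nabla>p \<cdot> y + 3 p = (m + 3) p\<close> when \<open>p\<close> is homogeneous of degree \<open>m\<close> in \<open>y\<close>.
  Expanding \<open>q\<close> in monomials centred at \<open>V\<close> and dividing each homogeneous part of \<open>div q\<close>
  by its degree plus three therefore yields \<open>p\<close> of degree \<open>\<le> k - 1\<close> with \<open>div (p y) = div q\<close>,
  and \<open>q - p y\<close> is a divergence-free polynomial field with the same Koszul image. It is
  divergence-free on all of \<open>\<real>\<^sup>3\<close>.\<close>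

definition mdegree :: "nat \<times> nat \<times> nat \<Rightarrow> nat" where
  "mdegree = (\<lambda>(a, b, d). a + b + d)"

definition multi_indices :: "nat \<Rightarrow> (nat \<times> nat \<times> nat) set" where
  "multi_indices k = {\<alpha>. mdegree \<alpha> \<le> k}"

definition monomial_at :: "real^3 \<Rightarrow> nat \<times> nat \<times> nat \<Rightarrow> real^3 \<Rightarrow> real" where
  "monomial_at V = (\<lambda>(a, b, d) v. (v$1 - V$1)^a * (v$2 - V$2)^b * (v$3 - V$3)^d)"

definition poly_at :: "real^3 \<Rightarrow> nat \<Rightarrow> (real^3 \<Rightarrow> real) set" where
  "poly_at V k = {p. \<exists>c. \<forall>v. p v = (\<Sum>\<alpha>\<in>multi_indices k. c \<alpha> * monomial_at V \<alpha> v)}"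

lemma mdegree_Pair [simp]: "mdegree (a, b, d) = a + b + d"
  by (simp add: mdegree_def)

lemma monomial_at_Pair [simp]:
  "monomial_at V (a, b, d) v = (v$1 - V$1)^a * (v$2 - V$2)^b * (v$3 - V$3)^d"
  by (simp add: monomial_at_def)

lemma finite_multi_indices: "finite (multi_indices k)"
  by (rule finite_subset[of _ "{..k} \<times> {..k} \<times> {..k}"]) (auto simp: multi_indices_def)

lemma poly3_eq_poly_at_0: "poly3 k = poly_at 0 k"
proof (intro set_eqI iffI)
  fix p assume "p \<in> poly3 k"
  then obtain c where "\<forall>v. p v = (\<Sum>(a,b,d) \<in> {(a,b,d). a + b + d \<le> k}. c a b d * (v$1)^a * (v$2)^b * (v$3)^d)"
    by (auto simp: poly3_def)
  then show "p \<in> poly_at 0 k"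
    unfolding poly_at_def multi_indices_def
    by (intro CollectI exI[of _ "\<lambda>(a, b, d). c a b d"]) (auto simp: mdegree_def monomial_at_def split_def mult.assoc)
next
  fix p assume "p \<in> poly_at 0 k"
  then obtain c where "\<forall>v. p v = (\<Sum>\<alpha>\<in>multi_indices k. c \<alpha> * monomial_at 0 \<alpha> v)"
    by (auto simp: poly_at_def)
  then show "p \<in> poly3 k"
    unfolding poly3_def multi_indices_def
    by (intro CollectI exI[of _ "\<lambda>a b d. c (a, b, d)"]) (auto simp: mdegree_def monomial_at_def split_def mult.assoc)
qed

lemma poly_at_zero: "(\<lambda>v. 0) \<in> poly_at V k"
  unfolding poly_at_def by (intro CollectI exI[of _ "\<lambda>_. 0"]) simp

lemma poly_at_add:
  assumes "p \<in> poly_at V k" "r \<in> poly_at V k"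
  shows "(\<lambda>v. p v + r v) \<in> poly_at V k"
proof -
  obtain c c' where "\<forall>v. p v = (\<Sum>\<alpha>\<in>multi_indices k. c \<alpha> * monomial_at V \<alpha> v)"
    and "\<forall>v. r v = (\<Sum>\<alpha>\<in>multi_indices k. c' \<alpha> * monomial_at V \<alpha> v)"
    using assms by (auto simp: poly_at_def)
  then show ?thesis
    unfolding poly_at_def
    by (intro CollectI exI[of _ "\<lambda>\<alpha>. c \<alpha> + c' \<alpha>"]) (simp add: distrib_right sum.distrib)
qed

lemma poly_at_cmult:
  assumes "p \<in> poly_at V k"
  shows "(\<lambda>v. r * p v) \<in> poly_at V k"
proof -
  obtain c where "\<forall>v. p v = (\<Sum>\<alpha>\<in>multi_indices k. c \<alpha> * monomial_at V \<alpha> v)"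
    using assms by (auto simp: poly_at_def)
  then show ?thesis
    unfolding poly_at_def
    by (intro CollectI exI[of _ "\<lambda>\<alpha>. r * c \<alpha>"]) (simp add: sum_distrib_left mult.assoc)
qed

lemma poly_at_diff:
  assumes "p \<in> poly_at V k" "r \<in> poly_at V k"
  shows "(\<lambda>v. p v - r v) \<in> poly_at V k"
  using poly_at_add[OF assms(1) poly_at_cmult[OF assms(2), of "-1"]] by simp

lemma poly_at_sum:
  assumes "finite I" "\<And>i. i \<in> I \<Longrightarrow> f i \<in> poly_at V k"
  shows "(\<lambda>v. \<Sum>i\<in>I. f i v) \<in> poly_at V k"
  using assms
proof (induction I rule: finite_induct)
  case empty
  then show ?case using poly_at_zero by simp
next
  case (insert x F)
  then show ?case using poly_at_add[of "f x" V k "\<lambda>v. \<Sum>i\<in>F. f i v"] by simp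
qed

lemma monomial_at_in_poly_at:
  assumes "\<alpha> \<in> multi_indices k"
  shows "monomial_at V \<alpha> \<in> poly_at V k"
  unfolding poly_at_def
  using assms finite_multi_indices
  by (intro CollectI exI[of _ "\<lambda>\<beta>. of_bool (\<beta> = \<alpha>)"]) (simp add: of_bool_def if_distrib[of "\<lambda>c. c * _"] sum.delta cong: if_cong)

lemma power_diff_binomial_shift:
  fixes x w w' :: real
  shows "(x - w)^a = (\<Sum>i\<le>a. (of_nat (a choose i) * (w' - w)^(a - i)) * (x - w')^i)"
proof -
  have "(x - w)^a = ((x - w') + (w' - w))^a" by simp
  also have "\<dots> = (\<Sum>i\<le>a. of_nat (a choose i) * (x - w')^i * (w' - w)^(a - i))"
    by (rule binomial_ring)
  finally show ?thesis by (simp add: mult_ac)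
qed

lemma monomial_at_change_center:
  assumes "\<alpha> \<in> multi_indices k"
  shows "monomial_at W \<alpha> \<in> poly_at V k"
proof -
  obtain a b d where \<alpha>: "\<alpha> = (a, b, d)" by (cases \<alpha>)
  define A where "A i = of_nat (a choose i) * (V$1 - W$1)^(a - i)" for i
  define B where "B j = of_nat (b choose j) * (V$2 - W$2)^(b - j)" for j
  define D where "D l = of_nat (d choose l) * (V$3 - W$3)^(d - l)" for l
  have expand: "monomial_at W \<alpha> v
      = (\<Sum>i\<le>a. \<Sum>j\<le>b. \<Sum>l\<le>d. (A i * B j * D l) * monomial_at V (i, j, l) v)" for v
    unfolding \<alpha> monomial_at_Pair A_def B_def D_def
    by (subst power_diff_binomial_shift[of _ _ a "V$1"], subst power_diff_binomial_shift[of _ _ b "V$2"],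
        subst power_diff_binomial_shift[of _ _ d "V$3"])
      (simp add: sum_distrib_left sum_distrib_right mult_ac, rule sum.swap)
  show ?thesis
    unfolding expand[abs_def]
    using assms by (intro poly_at_sum poly_at_cmult monomial_at_in_poly_at finite_atMost)
      (auto simp: \<alpha> multi_indices_def)
qed

lemma poly_at_change_center:
  assumes "p \<in> poly_at W k"
  shows "p \<in> poly_at V k"
proof -
  obtain c where "\<forall>v. p v = (\<Sum>\<alpha>\<in>multi_indices k. c \<alpha> * monomial_at W \<alpha> v)"
    using assms by (auto simp: poly_at_def)
  then have "p = (\<lambda>v. \<Sum>\<alpha>\<in>multi_indices k. c \<alpha> * monomial_at W \<alpha> v)" by auto
  also have "\<dots> \<in> poly_at V k"
    by (intro poly_at_sum poly_at_cmult monomial_at_change_center finite_multi_indices)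
  finally show ?thesis .
qed

lemma poly_at_coordinate_mult:
  assumes "p \<in> poly_at V k"
  shows "(\<lambda>v. (v$j - V$j) * p v) \<in> poly_at V (Suc k)"
proof -
  obtain c where c: "\<forall>v. p v = (\<Sum>\<alpha>\<in>multi_indices k. c \<alpha> * monomial_at V \<alpha> v)"
    using assms by (auto simp: poly_at_def)
  have "(\<lambda>v. (v$j - V$j) * monomial_at V \<alpha> v) \<in> poly_at V (Suc k)"
    if \<alpha>k: "\<alpha> \<in> multi_indices k" for \<alpha>
  proof -
    obtain a b d where \<alpha>: "\<alpha> = (a, b, d)" by (cases \<alpha>)
    show ?thesis
      using exhaust_3[of j] \<alpha>k monomial_at_in_poly_at[of "(Suc a, b, d)" "Suc k" V]
        monomial_at_in_poly_at[of "(a, Suc b, d)" "Suc k" V] monomial_at_in_poly_at[of "(a, b, Suc d)" "Suc k" V]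
      by (auto simp: \<alpha> multi_indices_def monomial_at_def mult_ac)
  qed
  then show ?thesis
    using c by (simp add: sum_distrib_left mult.left_commute)
      (intro poly_at_sum poly_at_cmult finite_multi_indices, auto)
qed

definition monomial_deriv :: "real^3 \<Rightarrow> nat \<times> nat \<times> nat \<Rightarrow> real^3 \<Rightarrow> real^3 \<Rightarrow> real" where
  "monomial_deriv V = (\<lambda>(a, b, d) v h.
     real a * monomial_at V (a - 1, b, d) v * h$1 + real b * monomial_at V (a, b - 1, d) v * h$2
     + real d * monomial_at V (a, b, d - 1) v * h$3)"

definition monomial_deriv2 :: "real^3 \<Rightarrow> nat \<times> nat \<times> nat \<Rightarrow> real^3 \<Rightarrow> real^3 \<Rightarrow> real^3 \<Rightarrow> real" where
  "monomial_deriv2 V = (\<lambda>(a, b, d) v h h'.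
     real a * h$1 * monomial_deriv V (a - 1, b, d) v h' + real b * h$2 * monomial_deriv V (a, b - 1, d) v h'
     + real d * h$3 * monomial_deriv V (a, b, d - 1) v h')"

lemma has_derivative_vec_nth [derivative_intros]:
  "((\<lambda>x::real^'n. x$i) has_derivative (\<lambda>x. x$i)) F"
  by (rule bounded_linear.has_derivative[OF bounded_linear_vec_nth has_derivative_ident])

lemma has_derivative_monomial_at:
  "(monomial_at V \<alpha> has_derivative monomial_deriv V \<alpha> v) (at v)"
  unfolding monomial_at_def monomial_deriv_def
  by (cases \<alpha>) (auto intro!: derivative_eq_intros simp: algebra_simps fun_eq_iff)

lemma has_derivative_monomial_deriv:
  "((\<lambda>w. monomial_deriv V \<alpha> w h) has_derivative monomial_deriv2 V \<alpha> v h) (at v)"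
  unfolding monomial_deriv_def monomial_deriv2_def
  by (cases \<alpha>) (auto intro!: derivative_eq_intros has_derivative_monomial_at simp: algebra_simps fun_eq_iff)

lemma monomial_deriv_radial:
  "monomial_deriv V \<alpha> v (v - V) = real (mdegree \<alpha>) * monomial_at V \<alpha> v"
  by (cases \<alpha>; rename_tac a b d; case_tac a; case_tac b; case_tac d)
    (auto simp: monomial_deriv_def algebra_simps)

lemma monomial_deriv2_radial:
  "monomial_deriv2 V \<alpha> v h (v - V) = (real (mdegree \<alpha>) - 1) * monomial_deriv V \<alpha> v h"
proof -
  obtain a b d where \<alpha>: "\<alpha> = (a, b, d)" by (cases \<alpha>)
  show ?thesis
    unfolding \<alpha> monomial_deriv2_def
    by (simp only: prod.case monomial_deriv_radial)
      (cases a; cases b; cases d; simp add: monomial_deriv_def algebra_simps)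
qed

lemma divergence_eq_sum:
  assumes "(q has_derivative q') (at v)"
  shows "divergence q v = (\<Sum>i\<in>UNIV. q' (axis i 1) $ i)"
  using frechet_derivative_at[OF assms] by (simp add: divergence_def)

lemma vec_expansion_axis: "(\<Sum>i\<in>UNIV. x $ i *\<^sub>R axis i 1) = (x :: real^'n)"
  using basis_expansion[of x] by (simp add: scalar_mult_eq_scaleR)

lemma has_derivative_componentwise_vec:
  fixes q :: "'a::real_normed_vector \<Rightarrow> real^'n"
  assumes "\<And>i. ((\<lambda>w. q w $ i) has_derivative f' i) (at v)"
  shows "(q has_derivative (\<lambda>h. \<Sum>i\<in>UNIV. f' i h *\<^sub>R axis i 1)) (at v)"
proof -
  have q: "q = (\<lambda>w. \<Sum>i\<in>UNIV. q w $ i *\<^sub>R axis i 1)"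
    by (simp add: vec_expansion_axis)
  show ?thesis
    by (subst q) (intro has_derivative_sum has_derivative_scaleR_left assms)
qed

lemma divergence_componentwise:
  assumes "\<And>i. ((\<lambda>w. q w $ i) has_derivative f' i) (at v)"
  shows "divergence q v = (\<Sum>i\<in>UNIV. f' i (axis i 1))"
  using divergence_eq_sum[OF has_derivative_componentwise_vec[OF assms]]
  by (simp add: sum_component axis_def of_bool_def[symmetric])

lemma divergence_minus_radial:
  assumes "(q has_derivative q') (at v)" and "(p has_derivative p') (at v)"
  shows "divergence (\<lambda>w. q w - p w *\<^sub>R (w - V)) v = divergence q v - (p' (v - V) + 3 * p v)"
proof -
  have "((\<lambda>w. q w - p w *\<^sub>R (w - V)) has_derivative (\<lambda>h. q' h - (p' h *\<^sub>R (v - V) + p v *\<^sub>R h))) (at v)"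
    by (auto intro!: derivative_eq_intros assms)
  moreover have "p' (v - V) = (\<Sum>i\<in>UNIV. (v - V) $ i * p' (axis i 1))"
  proof -
    have "p' (v - V) = p' (\<Sum>i\<in>UNIV. (v - V) $ i *\<^sub>R axis i 1)"
      by (simp only: vec_expansion_axis)
    also have "\<dots> = (\<Sum>i\<in>UNIV. (v - V) $ i * p' (axis i 1))"
      using has_derivative_linear[OF assms(2)] by (simp add: linear_sum linear_scale)
    finally show ?thesis .
  qed
  ultimately show ?thesis
    by (simp add: divergence_eq_sum[OF assms(1)] divergence_eq_sum sum_subtractf sum.distrib mult.commute)
qed

lemma koszul_minus_radial:
  "koszul V (\<lambda>w. q w - p w *\<^sub>R (w - V)) = koszul V q"
  by (simp add: fun_eq_iff koszul_def Cross3.right_diff_distrib cross_mult_right)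

text \<open>For \<open>q = \<Sum> C i \<alpha> y\<^sup>\<alpha> e\<^sub>i\<close>, the term \<open>C i \<alpha> \<partial>\<^sub>i y\<^sup>\<alpha>\<close> of \<open>div q\<close> is homogeneous of degree
  \<open>|\<alpha>| - 1\<close>, hence is divided by \<open>|\<alpha>| - 1 + 3\<close>.\<close>

definition radial_correction ::
  "real^3 \<Rightarrow> (3 \<Rightarrow> nat \<times> nat \<times> nat \<Rightarrow> real) \<Rightarrow> (nat \<times> nat \<times> nat) set \<Rightarrow> real^3 \<Rightarrow> real" where
  "radial_correction V C I v =
     (\<Sum>\<alpha>\<in>I. \<Sum>i\<in>UNIV. C i \<alpha> / real (mdegree \<alpha> + 2) * monomial_deriv V \<alpha> v (axis i 1))"

lemma divergence_minus_radial_correction: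
  assumes "finite I" and q: "\<And>i w. q w $ i = (\<Sum>\<alpha>\<in>I. C i \<alpha> * monomial_at V \<alpha> w)"
  shows "divergence (\<lambda>w. q w - radial_correction V C I w *\<^sub>R (w - V)) v = 0"
proof -
  let ?D = "\<lambda>\<alpha> i. monomial_deriv V \<alpha> v (axis i 1)"
  let ?n = "\<lambda>\<alpha>. real (mdegree \<alpha>)"
  have dq: "((\<lambda>w. q w $ i) has_derivative (\<lambda>h. \<Sum>\<alpha>\<in>I. C i \<alpha> * monomial_deriv V \<alpha> v h)) (at v)" for i
    unfolding q by (intro has_derivative_sum has_derivative_mult_right has_derivative_monomial_at)
  have dP: "(radial_correction V C I has_derivative
      (\<lambda>h. \<Sum>\<alpha>\<in>I. \<Sum>i\<in>UNIV. C i \<alpha> / real (mdegree \<alpha> + 2) * monomial_deriv2 V \<alpha> v (axis i 1) h)) (at v)"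
    unfolding radial_correction_def[abs_def]
    by (intro has_derivative_sum has_derivative_mult_right has_derivative_monomial_deriv)
  have cancel: "c * d - (c / (m + 2) * ((m - 1) * d) + 3 * (c / (m + 2) * d)) = 0"
    if "m \<ge> 0" for c d m :: real
  proof -
    have "c / (m + 2) * ((m - 1) * d) + 3 * (c / (m + 2) * d) = c / (m + 2) * (m + 2) * d"
      by (simp only: ring_distribs mult_ac) (simp add: algebra_simps)
    also have "\<dots> = c * d" using that by simp
    finally show ?thesis by simp
  qed
  have "divergence (\<lambda>w. q w - radial_correction V C I w *\<^sub>R (w - V)) v
      = (\<Sum>\<alpha>\<in>I. \<Sum>i\<in>UNIV. C i \<alpha> * ?D \<alpha> i - (C i \<alpha> / (?n \<alpha> + 2) * ((?n \<alpha> - 1) * ?D \<alpha> i)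
          + 3 * (C i \<alpha> / (?n \<alpha> + 2) * ?D \<alpha> i)))"
    unfolding divergence_minus_radial[OF has_derivative_componentwise_vec[OF dq] dP]
      divergence_componentwise[OF dq]
    unfolding radial_correction_def
    by (simp add: monomial_deriv2_radial sum_subtractf sum.distrib sum_distrib_left sum.swap[of _ UNIV] add.commute)
  also have "\<dots> = 0"
    by (simp only: cancel of_nat_0_le_iff sum.neutral_const)
  finally show ?thesis .
qed

lemma coordinate_mult_monomial_deriv_in_poly_at:
  assumes "\<alpha> \<in> multi_indices k"
  shows "(\<lambda>w. (w$j - V$j) * monomial_deriv V \<alpha> w h) \<in> poly_at V k"
proof -
  obtain a b d where \<alpha>: "\<alpha> = (a, b, d)" by (cases \<alpha>)
  have lowered: "(\<lambda>w. (w$j - V$j) * (real n * monomial_at V \<beta> w * c)) \<in> poly_at V k"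
    if "n = 0 \<or> 0 < k \<and> \<beta> \<in> multi_indices (k - 1)" for n \<beta> c
    \<comment> \<open>a vanishing exponent \<open>n\<close> annihilates the junk index \<open>0 - 1 = 0\<close> in \<open>\<beta>\<close>\<close>
    using that
  proof
    assume "0 < k \<and> \<beta> \<in> multi_indices (k - 1)"
    then have "(\<lambda>w. (w$j - V$j) * monomial_at V \<beta> w) \<in> poly_at V k"
      using poly_at_coordinate_mult[OF monomial_at_in_poly_at[of \<beta> "k - 1" V], of j] by simp
    from poly_at_cmult[OF this, of "real n * c"] show ?thesis
      by (simp add: mult_ac)
  qed (simp add: poly_at_zero)
  have "a = 0 \<or> 0 < k \<and> (a - 1, b, d) \<in> multi_indices (k - 1)"
    "b = 0 \<or> 0 < k \<and> (a, b - 1, d) \<in> multi_indices (k - 1)"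
    "d = 0 \<or> 0 < k \<and> (a, b, d - 1) \<in> multi_indices (k - 1)"
    using assms by (auto simp: \<alpha> multi_indices_def)
  then show ?thesis
    unfolding \<alpha> monomial_deriv_def prod.case distrib_left
    by (intro poly_at_add lowered)
qed

lemma radial_correction_coordinate_mult_in_poly_at:
  assumes "finite I" and "I \<subseteq> multi_indices k"
  shows "(\<lambda>w. radial_correction V C I w * (w$j - V$j)) \<in> poly_at V k"
proof -
  have "(\<lambda>w. C i \<alpha> / real (mdegree \<alpha> + 2) * monomial_deriv V \<alpha> w (axis i 1) * (w$j - V$j)) \<in> poly_at V k"
    if "\<alpha> \<in> I" for i \<alpha>
  proof -
    have "\<alpha> \<in> multi_indices k" using that assms(2) by blast
    from poly_at_cmult[OF coordinate_mult_monomial_deriv_in_poly_at[OF this, where h = "axis i 1" and j = j],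
        of "C i \<alpha> / real (mdegree \<alpha> + 2)"]
    show ?thesis by (simp add: mult_ac)
  qed
  then show ?thesis
    unfolding radial_correction_def sum_distrib_right
    by (intro poly_at_sum assms(1)) auto
qed

lemma polyvec3_divergence_free_koszul_representative:
  fixes V :: "real^3"
  assumes "q \<in> polyvec3 k"
  obtains q' where "q' \<in> polyvec3 k" and "\<And>v. divergence q' v = 0" and "koszul V q' = koszul V q"
proof -
  have "\<exists>c. \<forall>w. q w $ i = (\<Sum>\<alpha>\<in>multi_indices k. c \<alpha> * monomial_at V \<alpha> w)" for i
  proof -
    have "(\<lambda>w. q w $ i) \<in> poly_at V k"
      using assms poly_at_change_center[of _ 0 k V] by (auto simp: polyvec3_def poly3_eq_poly_at_0)
    then show ?thesis by (auto simp: poly_at_def)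
  qed
  then obtain C where C: "\<And>i w. q w $ i = (\<Sum>\<alpha>\<in>multi_indices k. C i \<alpha> * monomial_at V \<alpha> w)"
    by metis
  define P where "P = radial_correction V C (multi_indices k)"
  have "(\<lambda>w. q w - P w *\<^sub>R (w - V)) \<in> polyvec3 k"
    unfolding polyvec3_def poly3_eq_poly_at_0
  proof (intro CollectI allI)
    fix i
    have "(\<lambda>w. q w $ i - P w * (w$i - V$i)) \<in> poly_at V k"
      using assms unfolding P_def
      by (intro poly_at_diff radial_correction_coordinate_mult_in_poly_at finite_multi_indices order_refl)
        (auto simp: polyvec3_def poly3_eq_poly_at_0 intro: poly_at_change_center)
    then show "(\<lambda>w. (q w - P w *\<^sub>R (w - V)) $ i) \<in> poly_at 0 k"
      by (simp add: poly_at_change_center)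
  qed
  moreover have "divergence (\<lambda>w. q w - P w *\<^sub>R (w - V)) v = 0" for v
    unfolding P_def by (rule divergence_minus_radial_correction[OF finite_multi_indices C])
  moreover have "koszul V (\<lambda>w. q w - P w *\<^sub>R (w - V)) = koszul V q"
    by (rule koszul_minus_radial)
  ultimately show ?thesis by (rule that)
qed

theorem theorem7p1:
  fixes \<Omega> :: "(real^3) set" and V :: "real^3" and k :: nat
  assumes "open \<Omega>" and "\<Omega> \<noteq> {}" and "V \<in> \<Omega>"
  shows "{restrict (koszul V q1) \<Omega> | q1. q1 \<in> polyvec3 k}
       = {restrict (koszul V q2) \<Omega> | q2. q2 \<in> polyvec3 k \<and> (\<forall>v\<in>\<Omega>. divergence q2 v = 0)}"
proof (intro set_eqI iffI)
  fix f assume "f \<in> {restrict (koszul V q1) \<Omega> | q1. q1 \<in> polyvec3 k}"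
  then obtain q where f: "f = restrict (koszul V q) \<Omega>" and q: "q \<in> polyvec3 k" by blast
  obtain q' where q': "q' \<in> polyvec3 k" "\<And>v. divergence q' v = 0" and "koszul V q' = koszul V q"
    by (rule polyvec3_divergence_free_koszul_representative[OF q, where V = V]) blast
  then have "f = restrict (koszul V q') \<Omega>" by (simp add: f)
  with q' show "f \<in> {restrict (koszul V q2) \<Omega> | q2. q2 \<in> polyvec3 k \<and> (\<forall>v\<in>\<Omega>. divergence q2 v = 0)}"
    by blast
qed blast

end
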